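(* Let $G$ be a $1$-tuple regular finite group and let $N$ be a subgroup of $G$ that is a union of order classes. Then $C_G(N)$ is also a union of order classes.
   Context: A subgroup $N$ of $G$ is a union of order classes if for every $n\in\mathbb{N}$ it contains either all or none of the elements of order $n$ of $G$. A finite group $G$ is $1$-tuple regular if for all $g_1,h_1\in G$ of the same order there is a bijection $\Psi\colon G\to G$ such that for every $g\in G$ the assignment $g_1\mapsto h_1, g\mapsto\Psi(g)$ defines an isomorphism $\langle g_1,g\rangle\to\langle h_1,\Psi(g)\rangle$. *)

theory Defs
  imports "HOL-Algebra.Algebra"
begin

definition centralizer_of :: "('a, 'b) monoid_scheme \<Rightarrow> 'a set \<Rightarrow> 'a set" where
  "centralizer_of G N = {g \<in> carrier G. \<forall>n\<in>N. g \<otimes>\<^bsub>G\<^esub> n = n \<otimes>\<^bsub>G\<^esub> g}"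

definition union_of_order_classes :: "('a, 'b) monoid_scheme \<Rightarrow> 'a set \<Rightarrow> bool" where
  "union_of_order_classes G N \<longleftrightarrow>
     (\<forall>x\<in>carrier G. \<forall>y\<in>carrier G. group.ord G x = group.ord G y \<longrightarrow> (x \<in> N \<longleftrightarrow> y \<in> N))"

definition one_tuple_regular :: "('a, 'b) monoid_scheme \<Rightarrow> bool" where
  "one_tuple_regular G \<longleftrightarrow>
     (\<forall>g1\<in>carrier G. \<forall>h1\<in>carrier G. group.ord G g1 = group.ord G h1 \<longrightarrow>
        (\<exists>\<Psi>. bij_betw \<Psi> (carrier G) (carrier G) \<and>
           (\<forall>g\<in>carrier G. \<exists>\<phi>.
              \<phi> \<in> iso (G\<lparr>carrier := generate G {g1, g}\<rparr>) (G\<lparr>carrier := generate G {h1, \<Psi> g}\<rparr>)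
              \<and> \<phi> g1 = h1 \<and> \<phi> g = \<Psi> g)))"

end

theory Submission
  imports Defs
begin

text \<open>
  Let x centralize N and let y have the order of x. One-tuple regularity for the pair (x, y)
  yields a bijection \<Psi> of G such that each g is sent to \<Psi> g by an isomorphism
  \<langle>x, g\<rangle> \<cong> \<langle>y, \<Psi> g\<rangle> mapping x to y. Isomorphisms preserve orders and
  commutation, so \<Psi> preserves orders, and y commutes with \<Psi> g whenever x commutes with g.
  As N is finite and a union of order classes, the order-preserving injection \<Psi> permutes N;
  hence y centralizes \<Psi> ` N = N.
\<close>

lemma (in subgroup) ord_subgroup_structure:
  assumes "group G"
  shows "group.ord (G\<lparr>carrier := H\<rparr>) = group.ord G"
proof -
  interpret G: group G by fact
  interpret H: group "G\<lparr>carrier := H\<rparr>" using subgroup_is_group assms .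
  show ?thesis
    by (rule ext) (simp add: G.ord_def H.ord_def flip: G.nat_pow_consistent)
qed

lemma (in group_hom) ord_hom_inj:
  assumes inj: "inj_on h (carrier G)" and a: "a \<in> carrier G"
  shows "H.ord (h a) = G.ord a"
proof -
  have "h a [^]\<^bsub>H\<^esub> n = \<one>\<^bsub>H\<^esub> \<longleftrightarrow> a [^] n = \<one>" for n :: nat
  proof -
    have "h (a [^] n) = h \<one> \<longleftrightarrow> a [^] n = \<one>"
      using a by (intro inj_on_eq_iff[OF inj]) simp_all
    then show ?thesis
      using hom_nat_pow a by simp
  qed
  then show ?thesis
    using a by (simp add: H.ord_unique G.pow_eq_id)
qed

lemma hom_commute:
  assumes "h \<in> hom G H" and "a \<in> carrier G" and "b \<in> carrier G"
    and "a \<otimes>\<^bsub>G\<^esub> b = b \<otimes>\<^bsub>G\<^esub> a"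
  shows "h a \<otimes>\<^bsub>H\<^esub> h b = h b \<otimes>\<^bsub>H\<^esub> h a"
  using assms by (metis hom_mult)

lemma iso_subgroups_ord_eq:
  assumes "group G" and H1: "subgroup H1 G" and H2: "subgroup H2 G"
    and iso: "\<phi> \<in> iso (G\<lparr>carrier := H1\<rparr>) (G\<lparr>carrier := H2\<rparr>)" and "a \<in> H1"
  shows "group.ord G (\<phi> a) = group.ord G a"
proof -
  have "group_hom (G\<lparr>carrier := H1\<rparr>) (G\<lparr>carrier := H2\<rparr>) \<phi>"
    using iso H1 H2 \<open>group G\<close>
    by (simp add: group_hom_def group_hom_axioms_def subgroup.subgroup_is_group iso_def)
  moreover have "inj_on \<phi> H1"
    using iso by (simp add: iso_def bij_betw_def)
  ultimately show ?thesis
    using group_hom.ord_hom_inj \<open>a \<in> H1\<close>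
    by (fastforce simp: subgroup.ord_subgroup_structure[OF H1 \<open>group G\<close>]
        subgroup.ord_subgroup_structure[OF H2 \<open>group G\<close>])
qed

lemma (in group) one_tuple_regularE:
  assumes "one_tuple_regular G" and x: "x \<in> carrier G" and y: "y \<in> carrier G"
    and "ord x = ord y"
  obtains \<Psi> where "bij_betw \<Psi> (carrier G) (carrier G)"
    and "\<And>g. g \<in> carrier G \<Longrightarrow> ord (\<Psi> g) = ord g"
    and "\<And>g. g \<in> carrier G \<Longrightarrow> x \<otimes> g = g \<otimes> x \<Longrightarrow> y \<otimes> \<Psi> g = \<Psi> g \<otimes> y"
proof -
  obtain \<Psi> where bij: "bij_betw \<Psi> (carrier G) (carrier G)" and
    iso: "\<And>g. g \<in> carrier G \<Longrightarrow> \<exists>\<phi>.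
      \<phi> \<in> iso (G\<lparr>carrier := generate G {x, g}\<rparr>) (G\<lparr>carrier := generate G {y, \<Psi> g}\<rparr>)
      \<and> \<phi> x = y \<and> \<phi> g = \<Psi> g"
    using assms unfolding one_tuple_regular_def by meson
  have "ord (\<Psi> g) = ord g \<and> (x \<otimes> g = g \<otimes> x \<longrightarrow> y \<otimes> \<Psi> g = \<Psi> g \<otimes> y)"
    if g: "g \<in> carrier G" for g
  proof -
    obtain \<phi> where
      \<phi>: "\<phi> \<in> iso (G\<lparr>carrier := generate G {x, g}\<rparr>) (G\<lparr>carrier := generate G {y, \<Psi> g}\<rparr>)"
      and "\<phi> x = y" and "\<phi> g = \<Psi> g"
      using iso[OF g] by blast
    have x_in: "x \<in> generate G {x, g}" and g_in: "g \<in> generate G {x, g}"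
      by (simp_all add: generate.incl)
    have "ord (\<phi> g) = ord g"
      using iso_subgroups_ord_eq[OF is_group _ _ \<phi> g_in] x y g bij_betw_apply[OF bij g]
      by (simp add: generate_is_subgroup)
    moreover have "x \<otimes> g = g \<otimes> x \<Longrightarrow> \<phi> x \<otimes> \<phi> g = \<phi> g \<otimes> \<phi> x"
      using hom_commute[OF iso_imp_homomorphism[OF \<phi>]] x_in g_in by simp
    ultimately show ?thesis
      using \<open>\<phi> x = y\<close> \<open>\<phi> g = \<Psi> g\<close> by simp
  qed
  with bij show thesis
    using that by blast
qed

lemma union_of_order_classes_image_eq:
  assumes "union_of_order_classes G N" and "N \<subseteq> carrier G" and "finite N"
    and "inj_on \<Psi> N" and "\<Psi> ` N \<subseteq> carrier G"
    and "\<And>g. g \<in> N \<Longrightarrow> group.ord G (\<Psi> g) = group.ord G g"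
  shows "\<Psi> ` N = N"
proof -
  have "\<Psi> ` N \<subseteq> N"
    using assms unfolding union_of_order_classes_def by (metis image_subsetI image_subset_iff subsetD)
  then show ?thesis
    using assms by (simp add: card_image card_subset_eq)
qed

lemma union_of_order_classesI:
  assumes "\<And>x y. x \<in> carrier G \<Longrightarrow> y \<in> carrier G \<Longrightarrow> group.ord G x = group.ord G y
    \<Longrightarrow> x \<in> N \<Longrightarrow> y \<in> N"
  shows "union_of_order_classes G N"
  unfolding union_of_order_classes_def using assms by metis

lemma (in group) centralizer_of_order_class_closed:
  assumes "finite (carrier G)" and "one_tuple_regular G"
    and N: "N \<subseteq> carrier G" and "union_of_order_classes G N"
    and x: "x \<in> carrier G" and y: "y \<in> carrier G" and "ord x = ord y"
    and "x \<in> centralizer_of G N"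
  shows "y \<in> centralizer_of G N"
proof -
  obtain \<Psi> where bij: "bij_betw \<Psi> (carrier G) (carrier G)"
    and ord_\<Psi>: "\<And>g. g \<in> carrier G \<Longrightarrow> ord (\<Psi> g) = ord g"
    and commute_\<Psi>: "\<And>g. g \<in> carrier G \<Longrightarrow> x \<otimes> g = g \<otimes> x \<Longrightarrow> y \<otimes> \<Psi> g = \<Psi> g \<otimes> y"
    using one_tuple_regularE[OF \<open>one_tuple_regular G\<close> x y \<open>ord x = ord y\<close>] by blast
  have "\<Psi> ` N = N"
  proof (rule union_of_order_classes_image_eq[OF \<open>union_of_order_classes G N\<close> N])
    show "finite N"
      using \<open>finite (carrier G)\<close> N finite_subset by blast
    show "inj_on \<Psi> N" and "\<Psi> ` N \<subseteq> carrier G"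
      using bij N by (auto simp: bij_betw_def intro: inj_on_subset)
  qed (use ord_\<Psi> N in auto)
  have "y \<otimes> n = n \<otimes> y" if "n \<in> N" for n
  proof -
    obtain g where "g \<in> N" and "n = \<Psi> g"
      using \<open>n \<in> N\<close> \<open>\<Psi> ` N = N\<close> by blast
    then show ?thesis
      using commute_\<Psi> \<open>x \<in> centralizer_of G N\<close> N by (auto simp: centralizer_of_def)
  qed
  then show ?thesis
    using y by (simp add: centralizer_of_def)
qed

theorem lemma3p4:
  fixes G :: "('a, 'b) monoid_scheme" and N :: "'a set"
  assumes "group G" and "finite (carrier G)"
    and "one_tuple_regular G"
    and "subgroup N G" and "union_of_order_classes G N"
  shows "union_of_order_classes G (centralizer_of G N)"
proof (rule union_of_order_classesI)
  fix x y
  assume "x \<in> carrier G" "y \<in> carrier G" "group.ord G x = group.ord G y"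
    "x \<in> centralizer_of G N"
  then show "y \<in> centralizer_of G N"
    using group.centralizer_of_order_class_closed[OF \<open>group G\<close>] assms subgroup.subset
    by blast
qed

end
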